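(* There exist constants $C>0$ and $N$ such that for all integers $n\ge N$ and all $g\ge1$, \[0< s(n,g)\le \frac{C}{n^2}.\] That is, $s(n,g)=O(1/n^2)$ as $n\to\infty$, uniformly in $g$.
   Context: Define $\lambda:[0,\infty)\to(0,1/4]$ by $\lambda(0)=1/4$ and, for $\theta>0$, $\lambda(\theta)$ is the unique $\lambda\in(0,1/4)$ with $-1+\frac{\operatorname{artanh}(\sqrt{1-4\lambda})}{\sqrt{1-4\lambda}}=\theta$. For $\theta>0$ set $f(\theta)=-\ln\lambda(\theta)-2\theta-\theta\ln(1-4\lambda(\theta))$ and $j(\theta)=-\tfrac12\ln(1-4(\theta+1)\lambda(\theta))+\tfrac12\ln 2$. For integers $n\ge1$, $g\ge1$ let \[\Omega(n,g)=\frac{\sqrt g\,g^g}{\sqrt{2\pi}\,e^g\,g!}\,n^{2g-2}\exp\!\Big(nf\big(\tfrac gn\big)+j\big(\tfrac gn\big)\Big),\qquad \Omega(n,0)=\frac{4^n n^{-3/2}}{\sqrt{2\pi}},\] and $s(n,g)=\Omega(n,g-1)/\Omega(n,g)$ for $n,g\ge1$. *)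

theory Defs
  imports "HOL-Analysis.Analysis"
begin

definition lam :: "real \<Rightarrow> real" where
  "lam \<theta> = (if \<theta> = 0 then 1/4 else
     (THE l. 0 < l \<and> l < 1/4 \<and>
        -1 + artanh (sqrt (1 - 4*l)) / sqrt (1 - 4*l) = \<theta>))"

definition fF :: "real \<Rightarrow> real" where
  "fF \<theta> = - ln (lam \<theta>) - 2*\<theta> - \<theta> * ln (1 - 4 * lam \<theta>)"

definition jF :: "real \<Rightarrow> real" where
  "jF \<theta> = - (1/2) * ln (1 - 4*(\<theta>+1) * lam \<theta>) + (1/2) * ln 2"

definition Omega :: "nat \<Rightarrow> nat \<Rightarrow> real" where
  "Omega n g = (if g = 0 then 4 ^ n * real n powr (-3/2) / sqrt (2*pi)
     else sqrt (real g) * real g ^ g / (sqrt (2*pi) * exp (real g) * fact g)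
          * real n ^ (2*g - 2)
          * exp (real n * fF (real g / real n) + jF (real g / real n)))"

definition sR :: "nat \<Rightarrow> nat \<Rightarrow> real" where
  "sR n g = Omega n (g - 1) / Omega n g"

end

theory Submission
  imports Defs
begin

(* Substitute u = sqrt (1 - 4 lam \<theta>) \<in> (0,1). Then \<theta> = artanh u / u - 1 is strictly increasing
   in u, lam \<theta> = (1 - u^2)/4, and fF turns out to have derivative - ln (1 - 4 lam \<theta>) = - ln (u^2),
   which decreases in \<theta>: fF is concave. For g \<ge> 2, the tangent at \<theta> = g/n bounds
   n (fF ((g-1)/n) - fF (g/n)) by ln (1 - 4 lam (g/n)); elementary estimates of jF and of how
   u changes when \<theta> at most doubles then give Omega n (g-1) \<le> 12 e Omega n g / n^2, the Stirling
   prefactors costing at most the factor e. For g = 1, lam \<le> 1/4 and 1 - 4 lam \<theta> \<le> 3 \<theta> give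
   n fF (1/n) \<ge> n ln 4 + ln n - ln 3 - 2, so Omega n 1 beats the 4^n n^(-3/2) of Omega n 0 by n^2. *)

lemma artanh_ge_cubic:
  fixes t :: real
  assumes "0 \<le> t" "t < 1"
  shows "t + t^3/3 \<le> artanh t"
proof -
  let ?f = "\<lambda>x::real. artanh x - x - x^3/3"
  have "?f 0 \<le> ?f t"
  proof (rule DERIV_nonneg_imp_increasing_open[OF assms(1)])
    fix x :: real assume x: "0 < x" "x < t"
    then have "x^2 < 1" using assms by (simp add: power_less_one_iff)
    have "DERIV ?f x :> 1/(1-x^2) - 1 - x^2"
      using x assms by (auto intro!: derivative_eq_intros)
    moreover have "1/(1-x^2) - 1 - x^2 = x^4/(1-x^2)"
      using \<open>x^2 < 1\<close> by (simp add: field_simps power2_eq_square power4_eq_xxxx)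
    ultimately show "\<exists>y. DERIV ?f x :> y \<and> y \<ge> 0"
      using \<open>x^2 < 1\<close> by auto
  qed (use assms in \<open>auto intro!: continuous_intros\<close>)
  then show ?thesis by simp
qed

lemma one_minus_sq_mult_artanh_le:
  fixes t :: real
  assumes "0 \<le> t" "t < 1"
  shows "(1 - t^2) * artanh t \<le> t - 2*t^3/3"
proof -
  let ?f = "\<lambda>x::real. x - 2*x^3/3 - (1 - x^2) * artanh x"
  have "?f 0 \<le> ?f t"
  proof (rule DERIV_nonneg_imp_increasing_open[OF assms(1)])
    fix x :: real assume x: "0 < x" "x < t"
    then have "x^2 < 1" using assms by (simp add: power_less_one_iff)
    have "DERIV ?f x :> 1 - 2*x^2 - (-(2*x) * artanh x + (1 - x^2) / (1 - x^2))"
      using x assms by (auto intro!: derivative_eq_intros)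
    then have "DERIV ?f x :> 2 * x * (artanh x - x)"
      using \<open>x^2 < 1\<close> by (simp add: algebra_simps power2_eq_square)
    moreover have "0 \<le> x^3 / 3" using x by simp
    then have "x \<le> artanh x"
      using artanh_ge_cubic[of x] x assms by linarith
    ultimately show "\<exists>y. DERIV ?f x :> y \<and> y \<ge> 0"
      using x by auto
  qed (use assms in \<open>auto intro!: continuous_intros\<close>)
  then show ?thesis by simp
qed

(* In terms of u = sqrt (1 - 4 lam \<theta>): \<theta> = theta_u u, 1 - 4 (\<theta> + 1) lam \<theta> = h_u u and
   fF \<theta> = f_u u. *)

definition theta_u :: "real \<Rightarrow> real" where
  "theta_u u = artanh u / u - 1"

definition h_u :: "real \<Rightarrow> real" where
  "h_u u = 1 - (theta_u u + 1) * (1 - u^2)"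

definition f_u :: "real \<Rightarrow> real" where
  "f_u u = - ln ((1 - u^2) / 4) - 2 * theta_u u - theta_u u * ln (u^2)"

lemma theta_u_ge:
  assumes "0 < u" "u < 1"
  shows "u^2 / 3 \<le> theta_u u"
proof -
  have "(u + u^3/3) / u \<le> artanh u / u"
    using artanh_ge_cubic[of u] assms by (intro divide_right_mono) auto
  moreover have "(u + u^3/3) / u = 1 + u^2/3"
    using assms by (simp add: field_simps power2_eq_square power3_eq_cube)
  ultimately show ?thesis unfolding theta_u_def by linarith
qed

lemma h_u_ge:
  assumes "0 < u" "u < 1"
  shows "2 * u^2 / 3 \<le> h_u u"
proof -
  have "(theta_u u + 1) * (1 - u^2) = (1 - u^2) * artanh u / u"
    unfolding theta_u_def by simp
  also have "\<dots> \<le> (u - 2*u^3/3) / u"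
    using one_minus_sq_mult_artanh_le[of u] assms by (intro divide_right_mono) auto
  also have "\<dots> = 1 - 2 * u^2 / 3"
    using assms by (simp add: field_simps power2_eq_square power3_eq_cube)
  finally show ?thesis unfolding h_u_def by linarith
qed

lemma h_u_le_1:
  assumes "0 < u" "u < 1"
  shows "h_u u \<le> 1"
proof -
  have "0 \<le> theta_u u + 1"
    using theta_u_ge[OF assms] zero_le_power2[of u] by linarith
  moreover have "0 \<le> 1 - u^2"
    using assms by (simp add: power_le_one)
  ultimately show ?thesis unfolding h_u_def by simp
qed

lemma theta_u_le:
  assumes "0 < u" "u < 1"
  shows "theta_u u \<le> u^2 / (3 * (1 - u^2))"
proof -
  have "u^2 < 1" using assms by (simp add: power_less_one_iff)
  have "theta_u u * (1 - u^2) \<le> u^2 / 3"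
    using h_u_ge[OF assms] unfolding h_u_def by (simp add: algebra_simps)
  then show ?thesis
    using \<open>u^2 < 1\<close> by (simp add: pos_le_divide_eq algebra_simps)
qed

lemma theta_u_has_derivative:
  assumes "0 < u" "u < 1"
  shows "DERIV theta_u u :> h_u u / (u * (1 - u^2))"
proof -
  have "u^2 < 1" using assms by (simp add: power_less_one_iff)
  have "DERIV theta_u u :> (1 / (1 - u^2) * u - artanh u * 1) / (u * u)"
    unfolding theta_u_def[abs_def] using assms \<open>u^2 < 1\<close>
    by (auto intro!: derivative_eq_intros)
  also have "(1 / (1 - u^2) * u - artanh u * 1) / (u * u) = h_u u / (u * (1 - u^2))"
    using assms \<open>u^2 < 1\<close> unfolding h_u_def theta_u_def by (simp add: field_simps)
  finally show ?thesis .
qed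

lemma theta_u_deriv_pos:
  assumes "0 < u" "u < 1"
  shows "0 < h_u u / (u * (1 - u^2))"
proof -
  have "0 < 2 * u^2 / 3" using assms by simp
  then have "0 < h_u u" using h_u_ge[OF assms] by linarith
  then show ?thesis using assms by (simp add: power_less_one_iff)
qed

lemma strict_mono_on_theta_u: "strict_mono_on {0<..<1} theta_u"
proof (rule strict_mono_onI)
  fix a b :: real assume ab: "a \<in> {0<..<1}" "b \<in> {0<..<1}" "a < b"
  show "theta_u a < theta_u b"
  proof (rule DERIV_pos_imp_increasing[OF \<open>a < b\<close>])
    fix x assume "a \<le> x" "x \<le> b"
    then have "0 < x" "x < 1" using ab by auto
    then show "\<exists>y. DERIV theta_u x :> y \<and> 0 < y"
      using theta_u_has_derivative theta_u_deriv_pos by blast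
  qed
qed

lemma continuous_on_theta_u: "continuous_on {0<..<1} theta_u"
  unfolding theta_u_def[abs_def] by (intro continuous_intros) auto

lemma theta_u_surj:
  assumes "0 < \<theta>"
  shows "\<exists>u. 0 < u \<and> u < 1 \<and> theta_u u = \<theta>"
proof -
  define a where "a = min (1/2) (sqrt \<theta>)"
  have a: "0 < a" "a \<le> 1/2" using assms by (auto simp: a_def)
  have "a^2 \<le> (sqrt \<theta>)^2" using a by (intro power_mono) (auto simp: a_def)
  then have "a^2 \<le> \<theta>" using assms by simp
  have "a^2 \<le> 1/4"
    using power_mono[OF a(2), of 2] a(1) by (simp add: power_divide)
  have "theta_u a \<le> a^2 / (3 * (1 - a^2))"
    using theta_u_le[of a] a by simp
  also have "\<dots> \<le> a^2"
    using \<open>a^2 \<le> 1/4\<close> a(1) by (simp add: divide_le_eq)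
  finally have theta_a: "theta_u a \<le> \<theta>" using \<open>a^2 \<le> \<theta>\<close> by linarith
  define b where "b = tanh (\<theta> + 1)"
  have b: "0 < b" "b < 1"
    using assms by (simp_all add: b_def tanh_real_lt_1)
  have "\<theta> + 1 \<le> (\<theta> + 1) / b"
    using assms b by (simp add: le_divide_eq)
  then have theta_b: "\<theta> \<le> theta_u b"
    by (simp add: theta_u_def b_def artanh_tanh_real)
  have "a \<le> b"
    using strict_mono_on_less_eq[OF strict_mono_on_theta_u, of a b] a b theta_a theta_b
    by fastforce
  moreover have "continuous_on {a..b} theta_u"
    using a b by (intro continuous_on_subset[OF continuous_on_theta_u]) auto
  ultimately obtain u where "a \<le> u" "u \<le> b" "theta_u u = \<theta>"
    using IVT'[of theta_u a \<theta> b] theta_a theta_b by blast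
  then show ?thesis using a b by (intro exI[of _ u]) auto
qed

lemma lam_theta_u:
  assumes "0 < u" "u < 1"
  shows "lam (theta_u u) = (1 - u^2) / 4"
proof -
  have "u^2 < 1" using assms by (simp add: power_less_one_iff)
  have "0 < u^2 / 3" using assms by simp
  then have "0 < theta_u u"
    using theta_u_ge[OF assms] by linarith
  let ?P = "\<lambda>l. 0 < l \<and> l < 1/4 \<and> -1 + artanh (sqrt (1 - 4*l)) / sqrt (1 - 4*l) = theta_u u"
  have "(THE l. ?P l) = (1 - u^2) / 4"
  proof (rule the_equality)
    have "1 - 4 * ((1 - u^2) / 4) = u^2" by (simp add: field_simps)
    then have "sqrt (1 - 4 * ((1 - u^2) / 4)) = u" using assms by simp
    then show "?P ((1 - u^2) / 4)"
      using assms \<open>u^2 < 1\<close> by (simp add: theta_u_def)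
  next
    fix l assume l: "?P l"
    define s where "s = sqrt (1 - 4*l)"
    have s: "0 < s" "s < 1" "s^2 = 1 - 4*l"
      using l by (auto simp: s_def real_sqrt_less_iff)
    have "theta_u s = theta_u u"
      using l by (simp add: theta_u_def s_def)
    then have "s = u"
      using strict_mono_on_eq[OF strict_mono_on_theta_u] s assms by auto
    then show "l = (1 - u^2) / 4" using s by simp
  qed
  then show ?thesis using \<open>0 < theta_u u\<close> by (simp add: lam_def)
qed

lemma f_u_has_derivative:
  assumes "0 < u" "u < 1"
  shows "DERIV f_u u :> - ln (u^2) * (h_u u / (u * (1 - u^2)))"
proof -
  define d where "d = h_u u / (u * (1 - u^2))"
  have "u^2 < 1" using assms by (simp add: power_less_one_iff)
  have "DERIV (\<lambda>t. - ln ((1 - t^2) / 4)) u :> 2 * u / (1 - u^2)"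
    using assms \<open>u^2 < 1\<close>
    by (auto intro!: derivative_eq_intros simp: field_simps power2_eq_square)
  moreover have "DERIV (\<lambda>t. ln (t^2)) u :> 2 / u"
    using assms by (auto intro!: derivative_eq_intros simp: field_simps power2_eq_square)
  ultimately have "DERIV f_u u :> 2 * u / (1 - u^2) - 2 * d - (d * ln (u^2) + 2 / u * theta_u u)"
    unfolding f_u_def[abs_def] d_def
    by (intro DERIV_diff DERIV_cmult DERIV_mult theta_u_has_derivative assms)
  moreover have "2 * u / (1 - u^2) - 2 * d - 2 * theta_u u / u = 0"
  proof -
    define w where "w = 1 - u^2"
    have "w \<noteq> 0" "u \<noteq> 0" using assms \<open>u^2 < 1\<close> by (auto simp: w_def)
    then have "2 * u / w - 2 * ((1 - (theta_u u + 1) * w) / (u * w)) - 2 * theta_u u / u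
        = (2 * u^2 - 2 + 2 * w) / (u * w)"
      by (simp add: field_simps power2_eq_square)
    also have "\<dots> = 0" by (simp add: w_def)
    finally show ?thesis by (simp add: d_def h_u_def w_def)
  qed
  ultimately show ?thesis unfolding d_def by (simp add: algebra_simps)
qed

lemma f_u_le_tangent:
  assumes u: "0 < u" "u < 1" and v: "0 < v" "v < 1"
  shows "f_u v \<le> f_u u + ln (u^2) * (theta_u u - theta_u v)"
proof -
  let ?G = "\<lambda>t. f_u t + ln (u^2) * theta_u t"
  have G': "DERIV ?G t :> (ln (u^2) - ln (t^2)) * (h_u t / (t * (1 - t^2)))"
    if "0 < t" "t < 1" for t
    by (rule DERIV_cong[OF DERIV_add[OF f_u_has_derivative[OF that]
          DERIV_cmult[OF theta_u_has_derivative[OF that], of "ln (u^2)"]]])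
       (simp add: algebra_simps)
  have G'_sign: "0 \<le> (ln (u^2) - ln (t^2)) * (h_u t / (t * (1 - t^2))) \<longleftrightarrow> t \<le> u"
    if "0 < t" "t < 1" for t
  proof -
    have "0 \<le> a * (h_u t / (t * (1 - t^2))) \<longleftrightarrow> 0 \<le> a" for a
      using theta_u_deriv_pos[OF that] by (simp add: zero_le_mult_iff del: times_divide_eq_right)
    moreover have "ln (t^2) \<le> ln (u^2) \<longleftrightarrow> t \<le> u"
      using that u by (simp add: power_mono_iff)
    ultimately show ?thesis by simp
  qed
  have G_cont: "continuous_on {a..b} ?G" if "0 < a" "b < 1" for a b
  proof (rule DERIV_atLeastAtMost_imp_continuous_on)
    fix t assume "a \<le> t" "t \<le> b"
    then show "\<exists>y. DERIV ?G t :> y" using G'[of t] that by auto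
  qed
  consider "v \<le> u" | "u \<le> v" by linarith
  then have "?G v \<le> ?G u"
  proof cases
    case 1
    show ?thesis
    proof (rule DERIV_nonneg_imp_increasing_open[OF 1 _ G_cont[OF v(1) u(2)]])
      fix t assume "v < t" "t < u"
      then show "\<exists>y. DERIV ?G t :> y \<and> 0 \<le> y"
        using G'[of t] G'_sign[of t] u v by auto
    qed
  next
    case 2
    show ?thesis
    proof (rule DERIV_nonpos_imp_decreasing_open[OF 2 _ G_cont[OF u(1) v(2)]])
      fix t assume "u < t" "t < v"
      then show "\<exists>y. DERIV ?G t :> y \<and> y \<le> 0"
        using G'[of t] G'_sign[of t] u v by auto
    qed
  qed
  then show ?thesis by (simp add: algebra_simps)
qed

lemma theta_parametrisation:
  assumes "0 < \<theta>"
  obtains u where "0 < u" "u < 1" "\<theta> = theta_u u" "1 - 4 * lam \<theta> = u^2"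
proof -
  obtain u where u: "0 < u" "u < 1" "theta_u u = \<theta>"
    using theta_u_surj[OF assms] by blast
  then have "1 - 4 * lam \<theta> = u^2"
    using lam_theta_u[OF u(1,2)] by simp
  then show ?thesis using that u by simp
qed

lemma fF_theta_u:
  assumes "0 < u" "u < 1"
  shows "fF (theta_u u) = f_u u"
proof -
  have "1 - 4 * lam (theta_u u) = u^2"
    using lam_theta_u[OF assms] by simp
  then have "fF (theta_u u) = - ln (lam (theta_u u)) - 2 * theta_u u - theta_u u * ln (u^2)"
    unfolding fF_def by simp
  then show ?thesis
    unfolding f_u_def lam_theta_u[OF assms] .
qed

lemma jF_theta_u:
  assumes "0 < u" "u < 1"
  shows "jF (theta_u u) = - (1/2) * ln (h_u u) + (1/2) * ln 2"
proof -
  have "1 - 4 * (theta_u u + 1) * lam (theta_u u) = h_u u"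
    unfolding h_u_def lam_theta_u[OF assms] by simp
  then show ?thesis
    unfolding jF_def by simp
qed

lemma lam_bounds:
  assumes "0 < \<theta>"
  shows "0 < lam \<theta>" "lam \<theta> < 1/4"
proof -
  obtain u where "0 < u" "u < 1" "1 - 4 * lam \<theta> = u^2"
    by (rule theta_parametrisation[OF assms])
  moreover have "0 < u^2" "u^2 < 1"
    using \<open>0 < u\<close> \<open>u < 1\<close> by (simp_all add: power_less_one_iff)
  ultimately show "0 < lam \<theta>" "lam \<theta> < 1/4" by linarith+
qed

lemma fF_le_tangent:
  assumes "0 < \<theta>" "0 < \<theta>'"
  shows "fF \<theta>' \<le> fF \<theta> + ln (1 - 4 * lam \<theta>) * (\<theta> - \<theta>')"
proof -
  obtain u where u: "0 < u" "u < 1" "\<theta> = theta_u u" "1 - 4 * lam \<theta> = u^2"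
    by (rule theta_parametrisation[OF assms(1)])
  obtain v where v: "0 < v" "v < 1" "\<theta>' = theta_u v" "1 - 4 * lam \<theta>' = v^2"
    by (rule theta_parametrisation[OF assms(2)])
  show ?thesis
    using f_u_le_tangent[OF u(1,2) v(1,2)] u v by (simp add: fF_theta_u)
qed

lemma fF_ge:
  assumes "0 < \<theta>"
  shows "ln 4 - 2 * \<theta> - \<theta> * ln (3 * \<theta>) \<le> fF \<theta>"
proof -
  obtain u where u: "0 < u" "u < 1" "\<theta> = theta_u u" "1 - 4 * lam \<theta> = u^2"
    by (rule theta_parametrisation[OF assms])
  have "4 \<le> 1 / lam \<theta>"
    using lam_bounds[OF assms] by (simp add: field_simps)
  then have "ln 4 \<le> ln (1 / lam \<theta>)"
    by (intro ln_mono) auto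
  also have "\<dots> = - ln (lam \<theta>)"
    using lam_bounds[OF assms] by (simp add: ln_div)
  finally have "ln 4 \<le> - ln (lam \<theta>)" .
  moreover have "ln (1 - 4 * lam \<theta>) \<le> ln (3 * \<theta>)"
    unfolding u(4) using theta_u_ge[OF u(1,2)] u by (intro ln_mono) auto
  ultimately show ?thesis
    using assms mult_left_mono[of "ln (1 - 4 * lam \<theta>)" "ln (3 * \<theta>)" \<theta>]
    unfolding fF_def by linarith
qed

lemma jF_nonneg:
  assumes "0 < \<theta>"
  shows "0 \<le> jF \<theta>"
proof -
  obtain u where u: "0 < u" "u < 1" "\<theta> = theta_u u" "1 - 4 * lam \<theta> = u^2"
    by (rule theta_parametrisation[OF assms])
  have "0 < 2 * u^2 / 3" using u(1) by simp
  then have "0 < h_u u"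
    using h_u_ge[OF u(1,2)] by linarith
  then have "ln (h_u u) \<le> 0"
    using h_u_le_1[OF u(1,2)] by simp
  moreover have "jF \<theta> = ln 2 / 2 - ln (h_u u) / 2"
    using u jF_theta_u by simp
  ultimately show ?thesis
    using ln_gt_zero[of 2] by linarith
qed

lemma jF_le:
  assumes "0 < \<theta>"
  shows "jF \<theta> \<le> ln 2 - ln (1 - 4 * lam \<theta>) / 2"
proof -
  obtain u where u: "0 < u" "u < 1" "\<theta> = theta_u u" "1 - 4 * lam \<theta> = u^2"
    by (rule theta_parametrisation[OF assms])
  have "u^2 / 2 \<le> h_u u"
    using h_u_ge[OF u(1,2)] zero_le_power2[of u] by linarith
  then have "ln (u^2 / 2) \<le> ln (h_u u)"
    using u(1) by (intro ln_mono) auto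
  then have "ln (u^2) - ln 2 \<le> ln (h_u u)"
    using u(1) by (simp add: ln_div)
  then show ?thesis
    using u jF_theta_u by simp
qed

lemma lam_doubling_bound:
  assumes "0 < \<theta>" "\<theta> \<le> 2 * \<theta>'"
  shows "1 - 4 * lam \<theta> \<le> 6 * (1 - 4 * lam \<theta>')"
proof -
  have "0 < \<theta>'" using assms by simp
  obtain u where u: "0 < u" "u < 1" "\<theta> = theta_u u" "1 - 4 * lam \<theta> = u^2"
    by (rule theta_parametrisation[OF assms(1)])
  obtain v where v: "0 < v" "v < 1" "\<theta>' = theta_u v" "1 - 4 * lam \<theta>' = v^2"
    by (rule theta_parametrisation[OF \<open>0 < \<theta>'\<close>])
  have "u^2 \<le> 6 * v^2"
  proof (cases "v \<le> 1/2")
    case True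
    then have "v^2 \<le> 1/4"
      using power_mono[OF True, of 2] v(1) by (simp add: power_divide)
    have "\<theta>' \<le> v^2 / (3 * (1 - v^2))"
      using theta_u_le[OF v(1,2)] v(3) by simp
    also have "\<dots> \<le> v^2 / (9/4)"
      using \<open>v^2 \<le> 1/4\<close> by (intro divide_left_mono) auto
    finally have "\<theta>' \<le> 4 * v^2 / 9" by simp
    then show ?thesis
      using theta_u_ge[OF u(1,2)] u(3) assms(2) zero_le_power2[of v] by linarith
  next
    case False
    then have "1/4 \<le> v^2"
      using power_mono[of "1/2" v 2] by (simp add: power_divide)
    moreover have "u^2 \<le> 1" using u by (simp add: power_le_one)
    ultimately show ?thesis by linarith
  qed
  then show ?thesis using u v by simp
qed

lemma exponent_decrement:
  fixes x \<theta> \<theta>' :: real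
  assumes "0 < \<theta>'" "\<theta> \<le> 2 * \<theta>'" "0 \<le> x" "x * (\<theta> - \<theta>') = 1"
  shows "x * fF \<theta>' + jF \<theta>' \<le> x * fF \<theta> + jF \<theta> + ln 12"
proof -
  have "\<theta>' < \<theta>"
    using mult_nonneg_nonpos[OF assms(3), of "\<theta> - \<theta>'"] assms(4) by linarith
  then have "0 < \<theta>" using assms(1) by linarith
  define a where "a = 1 - 4 * lam \<theta>"
  define a' where "a' = 1 - 4 * lam \<theta>'"
  have a: "0 < a" and a': "0 < a'" "a' \<le> 1"
    using lam_bounds[OF \<open>0 < \<theta>\<close>] lam_bounds[OF assms(1)] by (auto simp: a_def a'_def)
  have "x * fF \<theta>' \<le> x * (fF \<theta> + ln a * (\<theta> - \<theta>'))"
    using fF_le_tangent[OF \<open>0 < \<theta>\<close> assms(1)] assms(3) unfolding a_def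
    by (rule mult_left_mono)
  also have "\<dots> = x * fF \<theta> + ln a * (x * (\<theta> - \<theta>'))"
    by (simp add: algebra_simps)
  also have "\<dots> = x * fF \<theta> + ln a"
    using assms(4) by simp
  finally have f_step: "x * fF \<theta>' \<le> x * fF \<theta> + ln a" .
  have "a \<le> 6 * a'"
    using lam_doubling_bound[OF \<open>0 < \<theta>\<close> assms(2)] by (simp add: a_def a'_def)
  then have "ln a \<le> ln (6 * a')"
    using a by simp
  also have "\<dots> = ln 6 + ln a'"
    using a' by (simp add: ln_mult)
  finally have "ln a \<le> ln 6 + ln a'" .
  moreover have "ln 12 = ln 6 + ln (2::real)"
    using ln_mult[of 6 2] by simp
  moreover have "ln a' \<le> 0"
    using a' by simp
  ultimately show ?thesis
    using f_step jF_le[OF assms(1), folded a'_def] jF_nonneg[OF \<open>0 < \<theta>\<close>] by linarith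
qed

lemma exponent_at_reciprocal:
  fixes x :: real
  assumes "0 < x"
  shows "x * ln 4 + ln x - ln 3 - 2 \<le> x * fF (1 / x) + jF (1 / x)"
proof -
  have "x * ln 4 + ln x - ln 3 - 2 = x * (ln 4 - 2 * (1 / x) - 1 / x * ln (3 * (1 / x)))"
    using assms by (simp add: algebra_simps ln_div)
  also have "\<dots> \<le> x * fF (1 / x)"
    using fF_ge[of "1 / x"] assms by (intro mult_left_mono) auto
  also have "\<dots> \<le> x * fF (1 / x) + jF (1 / x)"
    using jF_nonneg[of "1 / x"] assms by simp
  finally show ?thesis .
qed

definition Omega_coeff :: "nat \<Rightarrow> real" where
  "Omega_coeff g = sqrt (real g) * real g ^ g / (sqrt (2 * pi) * exp (real g) * fact g)"

lemma Omega_eq: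
  assumes "1 \<le> g"
  shows "Omega n g = Omega_coeff g * real n ^ (2 * g - 2)
           * exp (real n * fF (real g / real n) + jF (real g / real n))"
  using assms by (simp add: Omega_def Omega_coeff_def)

lemma Omega_coeff_pos: "1 \<le> g \<Longrightarrow> 0 < Omega_coeff g"
  unfolding Omega_coeff_def by (intro divide_pos_pos mult_pos_pos) auto

lemma Omega_coeff_le_Suc: "Omega_coeff m \<le> exp 1 * Omega_coeff (Suc m)"
proof -
  define K where "K = 1 / (sqrt (2 * pi) * exp (real m) * fact m)"
  have "0 < K" unfolding K_def by (intro divide_pos_pos mult_pos_pos) auto
  have "Omega_coeff m = K * (sqrt (real m) * real m ^ m)"
    unfolding Omega_coeff_def K_def by simp
  also have "\<dots> \<le> K * (sqrt (real (Suc m)) * real (Suc m) ^ m)"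
    using \<open>0 < K\<close> by (intro mult_left_mono mult_mono power_mono) auto
  also have "\<dots> = exp 1 * Omega_coeff (Suc m)"
  proof -
    have "exp (real (Suc m)) = exp 1 * exp (real m)"
      by (simp add: exp_add[symmetric])
    then show ?thesis
      by (simp add: Omega_coeff_def K_def field_simps del: of_nat_Suc)
  qed
  finally show ?thesis .
qed

lemma Omega_pos:
  assumes "1 \<le> n"
  shows "0 < Omega n g"
proof (cases "g = 0")
  case True
  then show ?thesis using assms by (simp add: Omega_def)
next
  case False
  then show ?thesis using assms Omega_eq[of g n] Omega_coeff_pos[of g] by simp
qed

lemma Omega_le_Suc:
  assumes "1 \<le> n" "1 \<le> m"
  shows "Omega n m \<le> 12 * exp 1 * Omega n (Suc m) / (real n)^2"
proof -
  define E where "E g = real n * fF (real g / real n) + jF (real g / real n)" for g :: nat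
  have "0 < real n" using assms by simp
  have "E m \<le> E (Suc m) + ln 12"
    unfolding E_def using assms
    by (intro exponent_decrement) (auto simp: field_simps)
  then have "exp (E m) \<le> exp (E (Suc m) + ln 12)"
    by simp
  also have "\<dots> = 12 * exp (E (Suc m))"
    by (simp add: exp_add)
  finally have exp_E: "exp (E m) \<le> 12 * exp (E (Suc m))" .
  have "2 * Suc m - 2 = (2 * m - 2) + 2" using assms by simp
  then have "real n ^ (2 * Suc m - 2) = real n ^ (2 * m - 2) * (real n)^2"
    by (metis power_add)
  then have Omega_Suc: "Omega n (Suc m)
      = Omega_coeff (Suc m) * real n ^ (2 * m - 2) * (real n)^2 * exp (E (Suc m))"
    using Omega_eq[of "Suc m" n] by (simp add: E_def)
  have "Omega n m = Omega_coeff m * real n ^ (2 * m - 2) * exp (E m)"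
    using Omega_eq[OF assms(2)] by (simp add: E_def)
  also have "\<dots> \<le> (exp 1 * Omega_coeff (Suc m)) * real n ^ (2 * m - 2) * (12 * exp (E (Suc m)))"
    using Omega_coeff_le_Suc[of m] exp_E Omega_coeff_pos[OF assms(2)] \<open>0 < real n\<close>
    by (intro mult_mono) auto
  also have "\<dots> = 12 * exp 1 * Omega n (Suc m) / (real n)^2"
    unfolding Omega_Suc using \<open>0 < real n\<close> by (simp add: field_simps)
  finally show ?thesis .
qed

lemma Omega_0_le:
  assumes "1 \<le> n"
  shows "Omega n 0 \<le> 3 * exp 1 ^ 3 * Omega n 1 / (real n)^2"
proof -
  define E where "E = real n * fF (1 / real n) + jF (1 / real n)"
  have "0 < real n" using assms by simp
  have "exp (real n * ln 4 + ln (real n) - ln 3 - 2) \<le> exp E"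
    unfolding E_def using exponent_at_reciprocal \<open>0 < real n\<close> by simp
  then have exp_E: "4 ^ n * real n \<le> 3 * exp 1 ^ 2 * exp E"
    using \<open>0 < real n\<close>
    by (simp add: exp_add exp_diff exp_of_nat_mult field_simps exp_of_nat_mult[of 2 1, symmetric])
  have "Omega n 0 = 4 ^ n * real n powr (-3/2) / sqrt (2 * pi)"
    by (simp add: Omega_def)
  also have "\<dots> \<le> 4 ^ n * real n powr (-1) / sqrt (2 * pi)"
    using assms by (intro divide_right_mono mult_left_mono powr_mono) auto
  also have "\<dots> = 4 ^ n * real n / (sqrt (2 * pi) * (real n)^2)"
    using \<open>0 < real n\<close> by (simp add: powr_minus_divide power2_eq_square)
  also have "\<dots> \<le> 3 * exp 1 ^ 2 * exp E / (sqrt (2 * pi) * (real n)^2)"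
    using exp_E \<open>0 < real n\<close> by (intro divide_right_mono) auto
  also have "\<dots> = 3 * exp 1 ^ 3 * Omega n 1 / (real n)^2"
    by (simp add: Omega_def E_def field_simps power2_eq_square power3_eq_cube)
  finally show ?thesis .
qed

lemma Omega_pred_le:
  assumes n: "1 \<le> n" and g: "1 \<le> g"
  shows "Omega n (g - 1) \<le> 100 * Omega n g / (real n)^2"
proof -
  have "exp 1 \<le> (3::real)" by (rule exp_le)
  have scale: "c * Omega n g / (real n)^2 \<le> 100 * Omega n g / (real n)^2" if "c \<le> 100" for c
    using Omega_pos[OF n, of g] that by (intro divide_right_mono mult_right_mono) auto
  show ?thesis
  proof (cases "g = 1")
    case True
    have "3 * exp 1 ^ 3 \<le> (100::real)"
      using power_mono[OF \<open>exp 1 \<le> 3\<close>, of 3] by simp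
    then show ?thesis
      using Omega_0_le[OF n] scale True by fastforce
  next
    case False
    then obtain m where "g = Suc m" "1 \<le> m" using g by (cases g) auto
    then show ?thesis
      using Omega_le_Suc[OF n \<open>1 \<le> m\<close>] scale[of "12 * exp 1"] \<open>exp 1 \<le> 3\<close> by simp
  qed
qed

theorem proposition8:
  "\<exists>C::real. C > 0 \<and> (\<exists>N::nat. \<forall>n g. n \<ge> N \<longrightarrow> n \<ge> 1 \<longrightarrow> g \<ge> 1 \<longrightarrow>
      0 < sR n g \<and> sR n g \<le> C / (real n)^2)"
proof (intro exI[of _ "100::real"] conjI exI[of _ "1::nat"] allI impI)
  show "(100::real) > 0" by simp
  fix n g :: nat
  assume n: "n \<ge> 1" and g: "g \<ge> 1"
  show "0 < sR n g" "sR n g \<le> 100 / (real n)^2"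
    using Omega_pred_le[OF n g] Omega_pos[OF n, of g] Omega_pos[OF n, of "g - 1"] n
    by (simp_all add: sR_def divide_le_eq field_simps)
qed

end
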